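(* Let $a,n$ be coprime positive integers and let $\pi\in S(\mathbb{Z}_n)$ be given by $\pi(x)=ax$. Then $t([\pi])=n-\sum_{d\mid n}\frac{\varphi(d)}{\mathrm{ord}_d(a)}$, the sum running over positive divisors $d$ of $n$.
   Context: $S(\mathbb{Z}_n)$ is the set of bijections $\mathbb{Z}_n\to\mathbb{Z}_n$. For $\pi\in S(\mathbb{Z}_n)$, $\mathrm{cyc}(\pi)$ is the number of cycles (including fixed points) of $\pi$, $t(\pi)=n-\mathrm{cyc}(\pi)$, $[\pi]=\{x\mapsto \pi(x+b): b\in\mathbb{Z}_n\}$ and $t([\pi])=\min_{\sigma\in[\pi]}t(\sigma)$. $\varphi$ is Euler's totient function and $\mathrm{ord}_d(a)$ is the multiplicative order of $a\bmod d$ in $\mathbb{Z}_d^\times$ (with $\mathrm{ord}_1(a)=1$). *)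

theory Defs
  imports "HOL-Number_Theory.Number_Theory"
begin

text \<open>Z_n is represented by the residues {0..<n}; a map Z_n -> Z_n by a function nat => nat
  (only its values on {0..<n} matter).\<close>

definition zn_perm :: "nat \<Rightarrow> (nat \<Rightarrow> nat) \<Rightarrow> bool" where
  "zn_perm n f \<longleftrightarrow> bij_betw f {0..<n} {0..<n}"

definition zn_cycles :: "nat \<Rightarrow> (nat \<Rightarrow> nat) \<Rightarrow> nat set set" where
  "zn_cycles n f = {{(f ^^ k) x | k. True} | x. x < n}"

definition cyc :: "nat \<Rightarrow> (nat \<Rightarrow> nat) \<Rightarrow> nat" where
  "cyc n f = card (zn_cycles n f)"

definition tperm :: "nat \<Rightarrow> (nat \<Rightarrow> nat) \<Rightarrow> nat" where
  "tperm n f = n - cyc n f"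

definition shift_class :: "nat \<Rightarrow> (nat \<Rightarrow> nat) \<Rightarrow> (nat \<Rightarrow> nat) set" where
  "shift_class n f = {(\<lambda>x. f ((x + b) mod n)) | b. b < n}"

definition tclass :: "nat \<Rightarrow> (nat \<Rightarrow> nat) \<Rightarrow> nat" where
  "tclass n f = Min (tperm n ` shift_class n f)"

end

theory Submission
  imports Defs "HOL-Combinatorics.Orbits"
begin

(* Every map of the class [pi] is x \<mapsto> a (x + b) mod n, an affine map with slope a, so the
   fixed points of its k-th iterate are either empty or a translate of the fixed points of
   x \<mapsto> a^k x mod n. By the Burnside-type count "number of cycles times a common period N
   = total number of fixed points of the first N iterates", the shift b = 0 has the most
   cycles. For x \<mapsto> a x mod n the cycle through x has length ord_(n / gcd(x,n))(a); counting
   cycles as the sum of reciprocal cycle lengths over all x and grouping the residues x by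
   gcd(x, n) gives the sum over the divisors of n. *)

lemma self_in_orbit_if_funpow_eq:
  assumes "(f ^^ N) x = x" "0 < N"
  shows "x \<in> orbit f x"
  unfolding orbit_altdef using assms by (blast intro: sym)

lemma card_orbit_eq_funpow_dist1:
  assumes "x \<in> orbit f x"
  shows "card (orbit f x) = funpow_dist1 f x x"
  using card_image[OF inj_on_funpow_dist1[OF assms]] orbit_conv_funpow_dist1[OF assms] by simp

lemma funpow_eq_self_iff_card_orbit_dvd:
  assumes "x \<in> orbit f x"
  shows "(f ^^ k) x = x \<longleftrightarrow> card (orbit f x) dvd k"
proof -
  define p where "p = funpow_dist1 f x x"
  have p: "(f ^^ p) x = x"
    unfolding p_def by (rule funpow_dist1_prop[OF assms])
  have "(f ^^ k) x = x \<longleftrightarrow> (f ^^ (k mod p)) x = x"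
    using funpow_mod_eq[OF p] by simp
  also have "\<dots> \<longleftrightarrow> k mod p = 0"
    using funpow_dist1_least[of "k mod p" f x x] by (auto simp: p_def)
  finally show ?thesis
    by (simp add: card_orbit_eq_funpow_dist1[OF assms] p_def dvd_eq_mod_eq_0)
qed

lemma card_funpow_eq_self_lessThan:
  assumes "(f ^^ N) x = x" "0 < N"
  shows "card {k\<in>{..<N}. (f ^^ k) x = x} * card (orbit f x) = N"
proof -
  define q where "q = card (orbit f x)"
  have periodic: "x \<in> orbit f x"
    using assms by (rule self_in_orbit_if_funpow_eq)
  have fixed_iff: "(f ^^ k) x = x \<longleftrightarrow> q dvd k" for k
    unfolding q_def by (rule funpow_eq_self_iff_card_orbit_dvd[OF periodic])
  then obtain m where N: "N = q * m"
    using assms(1) by blast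
  then have "q > 0" using assms(2) by (cases q) auto
  have "{k\<in>{..<N}. (f ^^ k) x = x} = (\<lambda>j. q * j) ` {..<m}"
    using \<open>q > 0\<close> by (auto simp: fixed_iff N)
  then have "card {k\<in>{..<N}. (f ^^ k) x = x} = m"
    using \<open>q > 0\<close> by (simp add: card_image inj_on_def)
  then show ?thesis using N q_def by simp
qed

lemma orbit_eq_if_in_orbit:
  assumes "x \<in> orbit f x" "y \<in> orbit f x"
  shows "orbit f y = orbit f x"
  using assms by (blast intro: orbit_trans orbit_swap)

lemma orbit_subset_if_image_subset:
  assumes "f ` S \<subseteq> S" "x \<in> S"
  shows "orbit f x \<subseteq> S"
proof
  fix y assume "y \<in> orbit f x"
  then show "y \<in> S" by induction (use assms in auto)
qed


lemma sum_inverse_card_orbit_eq_card_orbits: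
  assumes "finite S" "f ` S \<subseteq> S" "\<forall>x\<in>S. x \<in> orbit f x"
  shows "(\<Sum>x\<in>S. 1 / real (card (orbit f x))) = real (card (orbit f ` S))"
proof -
  have "(\<Sum>x\<in>S. 1 / real (card (orbit f x))) =
      (\<Sum>C\<in>orbit f ` S. \<Sum>y\<in>{y\<in>S. orbit f y = C}. 1 / real (card (orbit f y)))"
    by (rule sum.image_gen) (use assms(1) in auto)
  also have "\<dots> = (\<Sum>C\<in>orbit f ` S. 1)"
  proof (rule sum.cong[OF refl])
    fix C assume "C \<in> orbit f ` S"
    then obtain x where x: "x \<in> S" "C = orbit f x" by blast
    have "C \<subseteq> S"
      using orbit_subset_if_image_subset[OF assms(2) x(1)] x(2) by simp
    have fibre: "{y\<in>S. orbit f y = C} = C"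
    proof (intro equalityI subsetI)
      fix y assume "y \<in> {y\<in>S. orbit f y = C}"
      then show "y \<in> C" using assms(3) by auto
    next
      fix y assume "y \<in> C"
      then show "y \<in> {y\<in>S. orbit f y = C}"
        using \<open>C \<subseteq> S\<close> x assms(3) orbit_eq_if_in_orbit[of x f y] by auto
    qed
    have "finite C"
      using \<open>C \<subseteq> S\<close> assms(1) finite_subset by blast
    moreover have "C \<noteq> {}"
      using x(2) orbit_nonempty by simp
    moreover have "orbit f y = C" if "y \<in> C" for y
      using fibre that by blast
    ultimately show "(\<Sum>y\<in>{y\<in>S. orbit f y = C}. 1 / real (card (orbit f y))) = 1"
      by (simp add: fibre)
  qed
  finally show ?thesis by simp
qed

lemma card_orbits_mult_eq_sum_card_fixed_points:
  assumes "finite S" "f ` S \<subseteq> S" "\<forall>x\<in>S. (f ^^ N) x = x" "0 < N"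
  shows "card (orbit f ` S) * N = (\<Sum>k<N. card {x\<in>S. (f ^^ k) x = x})"
proof -
  have periodic: "\<forall>x\<in>S. x \<in> orbit f x"
    using assms(3,4) self_in_orbit_if_funpow_eq by metis
  have "(\<Sum>k<N. card {x\<in>S. (f ^^ k) x = x}) =
      (\<Sum>x\<in>S. card {k\<in>{..<N}. (f ^^ k) x = x})"
    using sum.swap_restrict[of "{..<N}" S "\<lambda>_ _. 1::nat" "\<lambda>k x. (f ^^ k) x = x"]
      assms(1)
    by simp
  also have "real \<dots> = (\<Sum>x\<in>S. real N * (1 / real (card (orbit f x))))"
    unfolding of_nat_sum
  proof (rule sum.cong[OF refl])
    fix x assume "x \<in> S"
    then have "real (card {k\<in>{..<N}. (f ^^ k) x = x}) * real (card (orbit f x)) = real N"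
      using card_funpow_eq_self_lessThan[of N f x] assms(3,4) by (metis of_nat_mult)
    moreover have "card (orbit f x) > 0"
      using card_orbit_eq_funpow_dist1[of x f] periodic \<open>x \<in> S\<close> by simp
    ultimately show "real (card {k\<in>{..<N}. (f ^^ k) x = x}) =
        real N * (1 / real (card (orbit f x)))"
      by (simp add: field_simps)
  qed
  also have "\<dots> = real N * (\<Sum>x\<in>S. 1 / real (card (orbit f x)))"
    by (simp only: sum_distrib_left)
  also have "\<dots> = real (card (orbit f ` S) * N)"
    using sum_inverse_card_orbit_eq_card_orbits[OF assms(1,2) periodic] by simp
  finally show ?thesis by (simp only: of_nat_eq_iff)
qed

(* The library's orbit f x only contains the iterates (f ^^ k) x with k > 0; it is the cycle
   through x when x is periodic. *)
lemma cyc_eq_card_orbits: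
  assumes "\<forall>x<n. x \<in> orbit f x"
  shows "cyc n f = card (orbit f ` {0..<n})"
proof -
  have "zn_cycles n f = orbit f ` {0..<n}"
    unfolding zn_cycles_def using assms by (auto simp: orbit_altdef_self_in)
  then show ?thesis by (simp add: cyc_def)
qed

lemma cyc_le: "cyc n f \<le> n"
proof -
  have "zn_cycles n f = (\<lambda>x. {(f ^^ k) x | k. True}) ` {0..<n}"
    unfolding zn_cycles_def by auto
  then show ?thesis
    unfolding cyc_def using card_image_le[of "{0..<n}"] by simp
qed

lemma cyc_mult_eq_sum_card_fixed_points:
  assumes "\<forall>x<n. f x < n" "\<forall>x<n. (f ^^ N) x = x" "0 < N"
  shows "cyc n f * N = (\<Sum>k<N. card {x\<in>{0..<n}. (f ^^ k) x = x})"
proof -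
  have "\<forall>x<n. x \<in> orbit f x"
    using assms(2,3) self_in_orbit_if_funpow_eq by metis
  then have "cyc n f = card (orbit f ` {0..<n})"
    by (rule cyc_eq_card_orbits)
  also have "\<dots> * N = (\<Sum>k<N. card {x\<in>{0..<n}. (f ^^ k) x = x})"
    using assms by (intro card_orbits_mult_eq_sum_card_fixed_points) auto
  finally show ?thesis .
qed

lemma funpow_less_if_less:
  assumes "\<forall>x<n. f x < n" "x < n"
  shows "(f ^^ k) x < n"
  using assms by (induction k) auto

lemma funpow_affine_cong:
  fixes f :: "nat \<Rightarrow> nat"
  assumes "\<And>x. [f x = u * x + c] (mod n)"
  shows "[(f ^^ k) x = u ^ k * x + (\<Sum>i<k. u ^ i) * c] (mod n)"
proof (induction k)
  case 0
  show ?case by simp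
next
  case (Suc k)
  have "[(f ^^ Suc k) x = u * (f ^^ k) x + c] (mod n)"
    using assms by simp
  also have "[u * (f ^^ k) x + c = u * (u ^ k * x + (\<Sum>i<k. u ^ i) * c) + c] (mod n)"
    using Suc.IH by (intro cong_add cong_mult cong_refl)
  also have "u * (u ^ k * x + (\<Sum>i<k. u ^ i) * c) + c =
      u ^ Suc k * x + (\<Sum>i<Suc k. u ^ i) * c"
    by (simp del: sum.lessThan_Suc add: sum.lessThan_Suc_shift sum_distrib_left algebra_simps)
  finally show ?case .
qed

lemma funpow_affine_mod_period:
  fixes f :: "nat \<Rightarrow> nat"
  assumes "\<And>x. [f x = u * x + c] (mod n)" "\<forall>x<n. f x < n" "x < n"
  shows "(f ^^ (ord n u * n)) x = x"
proof -
  define m where "m = ord n u"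
  define c' where "c' = (\<Sum>i<m. u ^ i) * c"
  have translation: "[(f ^^ m) y = 1 * y + c'] (mod n)" for y
  proof -
    have "[(f ^^ m) y = u ^ m * y + c'] (mod n)"
      unfolding c'_def by (rule funpow_affine_cong[OF assms(1)])
    also have "[u ^ m * y + c' = 1 * y + c'] (mod n)"
      unfolding m_def using ord by (intro cong_add cong_mult cong_refl)
    finally show ?thesis .
  qed
  have "[((f ^^ m) ^^ n) x = 1 ^ n * x + (\<Sum>i<n. 1 ^ i) * c'] (mod n)"
    using translation by (rule funpow_affine_cong)
  then have "[(f ^^ (m * n)) x = x] (mod n)"
    by (simp add: funpow_mult cong_def)
  moreover have "(f ^^ (m * n)) x < n"
    using assms(2,3) by (rule funpow_less_if_less)
  ultimately show ?thesis
    unfolding m_def using assms(3) cong_less_modulus_unique_nat by blast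
qed

lemma self_in_orbit_affine_mod:
  fixes f :: "nat \<Rightarrow> nat"
  assumes "\<And>x. [f x = u * x + c] (mod n)" "\<forall>x<n. f x < n" "coprime u n" "x < n"
  shows "x \<in> orbit f x"
proof (rule self_in_orbit_if_funpow_eq)
  show "(f ^^ (ord n u * n)) x = x"
    using assms(1,2,4) by (rule funpow_affine_mod_period)
  show "0 < ord n u * n"
    using assms(3,4) by (simp add: coprime_commute)
qed

lemma card_fixed_points_affine_le_linear:
  fixes g h :: "nat \<Rightarrow> nat"
  assumes g: "\<And>x. [g x = u * x + c] (mod n)" and h: "\<And>x. [h x = u * x] (mod n)"
    and h_less: "\<forall>x<n. h x < n"
  shows "card {x\<in>{0..<n}. g x = x} \<le> card {x\<in>{0..<n}. h x = x}"
proof (cases "{x\<in>{0..<n}. g x = x} = {}")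
  case False
  then obtain x0 where x0: "x0 < n" "g x0 = x0" by auto
  define shift where "shift x = (x + (n - x0)) mod n" for x
  have "shift ` {x\<in>{0..<n}. g x = x} \<subseteq> {y\<in>{0..<n}. h y = y}"
  proof (rule image_subsetI)
    fix x assume "x \<in> {x\<in>{0..<n}. g x = x}"
    then have x: "x < n" "g x = x" by auto
    define y where "y = shift x"
    have "y < n" unfolding y_def shift_def using x0 by simp
    have yx: "[y + x0 = x] (mod n)"
      unfolding y_def shift_def cong_def using x0 by (simp add: mod_add_left_eq)
    have "[u * y + x0 = u * y + (u * x0 + c)] (mod n)"
      using g[of x0] x0 by (intro cong_add cong_refl) simp
    also have "u * y + (u * x0 + c) = u * (y + x0) + c"
      by (simp add: algebra_simps)
    also have "[u * (y + x0) + c = u * x + c] (mod n)"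
      using yx by (intro cong_add cong_mult cong_refl)
    also have "[u * x + c = y + x0] (mod n)"
      using g[of x] x yx by (metis cong_sym cong_trans)
    finally have "[u * y = y] (mod n)"
      by (simp add: cong_add_rcancel_nat)
    with h[of y] have "[h y = y] (mod n)"
      by (rule cong_trans)
    then have "h y = y"
      using h_less \<open>y < n\<close> cong_less_modulus_unique_nat by blast
    with \<open>y < n\<close> show "shift x \<in> {y\<in>{0..<n}. h y = y}"
      by (simp add: y_def)
  qed
  moreover have "inj_on shift {x\<in>{0..<n}. g x = x}"
  proof
    fix x x'
    assume xx': "x \<in> {x\<in>{0..<n}. g x = x}" "x' \<in> {x\<in>{0..<n}. g x = x}"
      "shift x = shift x'"
    then have "[x + (n - x0) = x' + (n - x0)] (mod n)"
      unfolding shift_def cong_def by simp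
    then have "[x = x'] (mod n)"
      by (simp add: cong_add_rcancel_nat)
    then show "x = x'"
      using xx' cong_less_modulus_unique_nat by auto
  qed
  ultimately show ?thesis
    by (intro card_inj_on_le) auto
qed (metis card.empty le0)

lemma cong_mult_right_iff_cong_div_gcd:
  fixes u v x n :: nat
  assumes "0 < n"
  shows "[u * x = v * x] (mod n) \<longleftrightarrow> [u = v] (mod n div gcd x n)"
proof -
  define g where "g = gcd x n"
  define x' n' where "x' = x div g" and "n' = n div g"
  have "0 < g" "x = g * x'" "n = g * n'"
    using assms by (simp_all add: g_def x'_def n'_def)
  have "coprime x' n'"
    unfolding x'_def n'_def g_def using assms div_gcd_coprime by blast
  have "[u * x = v * x] (mod n) \<longleftrightarrow> [u * x' = v * x'] (mod n')"
    unfolding cong_def \<open>x = g * x'\<close> \<open>n = g * n'\<close>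
    using \<open>0 < g\<close> mod_mult_mult1[of g] by (simp add: ac_simps)
  also have "\<dots> \<longleftrightarrow> [u = v] (mod n')"
    using \<open>coprime x' n'\<close> by (rule cong_mult_rcancel_nat)
  finally show ?thesis
    unfolding n'_def g_def .
qed

lemma card_orbit_linear_mod:
  fixes f :: "nat \<Rightarrow> nat"
  assumes f: "\<And>x. [f x = u * x] (mod n)" and f_less: "\<forall>x<n. f x < n"
    and "coprime u n" "x < n"
  shows "card (orbit f x) = ord (n div gcd x n) u"
proof -
  have f': "[f x = u * x + 0] (mod n)" for x
    using f by simp
  have periodic: "x \<in> orbit f x"
    using f' f_less assms(3,4) by (rule self_in_orbit_affine_mod)
  have "card (orbit f x) dvd k \<longleftrightarrow> ord (n div gcd x n) u dvd k" for k
  proof -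
    have "(f ^^ k) x < n"
      using f_less assms(4) by (rule funpow_less_if_less)
    moreover have "[(f ^^ k) x = u ^ k * x] (mod n)"
      using funpow_affine_cong[OF f', of k x] by simp
    ultimately have "(f ^^ k) x = x \<longleftrightarrow> [u ^ k * x = 1 * x] (mod n)"
      using assms(4) by (metis cong_def cong_sym cong_trans mod_less mult_1)
    also have "\<dots> \<longleftrightarrow> [u ^ k = 1] (mod n div gcd x n)"
      using assms(4) by (intro cong_mult_right_iff_cong_div_gcd) simp
    also have "\<dots> \<longleftrightarrow> ord (n div gcd x n) u dvd k"
      by (rule ord_divides)
    finally show ?thesis
      using funpow_eq_self_iff_card_orbit_dvd[OF periodic] by simp
  qed
  then show ?thesis
    by (meson dvd_antisym dvd_refl)
qed

lemma sum_residues_by_gcd: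
  fixes F :: "nat \<Rightarrow> 'a::comm_semiring_1"
  assumes "0 < n"
  shows "(\<Sum>x\<in>{0..<n}. F (n div gcd x n)) = (\<Sum>d | d dvd n. of_nat (totient d) * F d)"
proof -
  define A where "A e = {k\<in>{0<..n}. gcd k n = e}" for e
  have "(\<Sum>x\<in>{0..<n}. F (n div gcd x n)) = (\<Sum>x\<in>{1..n}. F (n div gcd x n))"
  proof -
    have "{0..<n} = insert 0 {1..<n}" "{1..n} = insert n {1..<n}"
      using assms by auto
    then show ?thesis by simp
  qed
  also have "{1..n} = (\<Union>e\<in>{e. e dvd n}. A e)"
    by safe (auto simp: A_def)
  also have "(\<Sum>x\<in>(\<Union>e\<in>{e. e dvd n}. A e). F (n div gcd x n)) =
      (\<Sum>e | e dvd n. \<Sum>x\<in>A e. F (n div gcd x n))"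
    using assms by (intro sum.UNION_disjoint) (auto simp: A_def)
  also have "\<dots> = (\<Sum>e | e dvd n. of_nat (totient (n div e)) * F (n div e))"
  proof (rule sum.cong[OF refl])
    fix e assume "e \<in> {e. e dvd n}"
    then have "card (A e) = totient (n div e)"
      unfolding A_def using assms card_gcd_eq_totient by blast
    moreover have "(\<Sum>x\<in>A e. F (n div gcd x n)) = (\<Sum>x\<in>A e. F (n div e))"
      by (rule sum.cong) (auto simp: A_def)
    ultimately show "(\<Sum>x\<in>A e. F (n div gcd x n)) =
        of_nat (totient (n div e)) * F (n div e)"
      by simp
  qed
  also have "\<dots> = (\<Sum>d | d dvd n. of_nat (totient d) * F d)"
    using assms by (intro sum.reindex_bij_witness[of _ "(div) n" "(div) n"]) (auto elim!: dvdE)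
  finally show ?thesis .
qed

lemma cyc_affine_le_cyc_linear:
  fixes g h :: "nat \<Rightarrow> nat"
  assumes g: "\<And>x. [g x = u * x + c] (mod n)" "\<forall>x<n. g x < n"
    and h: "\<And>x. [h x = u * x] (mod n)" "\<forall>x<n. h x < n"
    and "coprime u n" "0 < n"
  shows "cyc n g \<le> cyc n h"
proof -
  define N where "N = ord n u * n"
  have "0 < N"
    unfolding N_def using assms(5,6) by (simp add: coprime_commute)
  have h': "[h x = u * x + 0] (mod n)" for x
    using h(1) by simp
  have periods: "\<forall>x<n. (g ^^ N) x = x" "\<forall>x<n. (h ^^ N) x = x"
    unfolding N_def using funpow_affine_mod_period[OF g] funpow_affine_mod_period[OF h' h(2)]
    by blast+
  have "cyc n g * N = (\<Sum>k<N. card {x\<in>{0..<n}. (g ^^ k) x = x})"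
    using g(2) periods(1) \<open>0 < N\<close> by (rule cyc_mult_eq_sum_card_fixed_points)
  also have "\<dots> \<le> (\<Sum>k<N. card {x\<in>{0..<n}. (h ^^ k) x = x})"
  proof (intro sum_mono card_fixed_points_affine_le_linear)
    show "[(g ^^ k) x = u ^ k * x + (\<Sum>i<k. u ^ i) * c] (mod n)" for k x
      using g(1) by (rule funpow_affine_cong)
    show "[(h ^^ k) x = u ^ k * x] (mod n)" for k x
      using funpow_affine_cong[OF h'] by simp
    show "\<forall>x<n. (h ^^ k) x < n" for k
      using h(2) funpow_less_if_less by blast
  qed
  also have "\<dots> = cyc n h * N"
    using h(2) periods(2) \<open>0 < N\<close>
    by (rule cyc_mult_eq_sum_card_fixed_points[symmetric])
  finally show ?thesis
    using \<open>0 < N\<close> by simp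
qed

lemma cyc_linear_mod:
  fixes h :: "nat \<Rightarrow> nat"
  assumes h: "\<And>x. [h x = u * x] (mod n)" "\<forall>x<n. h x < n"
    and "coprime u n" "0 < n"
  shows "real (cyc n h) = (\<Sum>d | d dvd n. real (totient d) / real (ord d u))"
proof -
  have h': "[h x = u * x + 0] (mod n)" for x
    using h(1) by simp
  have periodic: "\<forall>x<n. x \<in> orbit h x"
    using self_in_orbit_affine_mod[OF h' h(2) assms(3)] by blast
  have "real (cyc n h) = real (card (orbit h ` {0..<n}))"
    using periodic by (simp add: cyc_eq_card_orbits)
  also have "\<dots> = (\<Sum>x\<in>{0..<n}. 1 / real (card (orbit h x)))"
    using h(2) periodic by (intro sum_inverse_card_orbit_eq_card_orbits[symmetric]) auto
  also have "\<dots> = (\<Sum>x\<in>{0..<n}. 1 / real (ord (n div gcd x n) u))"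
    using card_orbit_linear_mod[OF h assms(3)] by simp
  also have "\<dots> = (\<Sum>d | d dvd n. real (totient d) * (1 / real (ord d u)))"
    using assms(4) by (rule sum_residues_by_gcd)
  finally show ?thesis
    by simp
qed

lemma bij_betw_mult_mod:
  fixes a n :: nat
  assumes "coprime a n"
  shows "bij_betw (\<lambda>x. a * x mod n) {0..<n} {0..<n}"
proof -
  have inj: "inj_on (\<lambda>x. a * x mod n) {0..<n}"
  proof
    fix x y assume xy: "x \<in> {0..<n}" "y \<in> {0..<n}" "a * x mod n = a * y mod n"
    then have "[x = y] (mod n)"
      using assms by (simp add: cong_def[symmetric] cong_mult_lcancel_nat)
    then show "x = y"
      using xy cong_less_modulus_unique_nat by auto
  qed
  moreover have "(\<lambda>x. a * x mod n) ` {0..<n} \<subseteq> {0..<n}"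
    by auto
  ultimately have "(\<lambda>x. a * x mod n) ` {0..<n} = {0..<n}"
    by (intro endo_inj_surj) auto
  with inj show ?thesis
    by (simp add: bij_betw_def)
qed

theorem proposition3p3:
  fixes a n :: nat
  assumes "0 < a" and "0 < n" and "coprime a n"
  shows "zn_perm n (\<lambda>x. (a * x) mod n) \<and>
         real (tclass n (\<lambda>x. (a * x) mod n)) =
           real n - (\<Sum>d\<in>{d. d dvd n}. real (totient d) / real (ord d a))"
proof
  show "zn_perm n (\<lambda>x. (a * x) mod n)"
    unfolding zn_perm_def using assms(3) by (rule bij_betw_mult_mod)
next
  define shift where "shift b = (\<lambda>x. a * ((x + b) mod n) mod n)" for b
  have shift_cong: "[shift b x = a * x + a * b] (mod n)" for b x
    unfolding shift_def cong_def by (simp add: mod_mult_right_eq algebra_simps)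
  have shift_less: "\<forall>x<n. shift b x < n" for b
    using assms(2) by (simp add: shift_def)
  have linear: "[shift 0 x = a * x] (mod n)" for x
    using shift_cong[of 0 x] by simp
  have "cyc n (shift b) \<le> cyc n (shift 0)" for b
    using shift_cong shift_less linear shift_less assms(3,2) by (rule cyc_affine_le_cyc_linear)
  moreover have "shift_class n (\<lambda>x. a * x mod n) = shift ` {..<n}"
    unfolding shift_class_def shift_def by auto
  ultimately have "tclass n (\<lambda>x. a * x mod n) = n - cyc n (shift 0)"
    unfolding tclass_def tperm_def using assms(2) by (intro Min_eqI) (auto intro: diff_le_mono2)
  moreover have "real (cyc n (shift 0)) = (\<Sum>d | d dvd n. real (totient d) / real (ord d a))"
    using linear shift_less assms(3,2) by (rule cyc_linear_mod)
  ultimately show "real (tclass n (\<lambda>x. (a * x) mod n)) =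
      real n - (\<Sum>d\<in>{d. d dvd n}. real (totient d) / real (ord d a))"
    using cyc_le[of n "shift 0"] by (simp add: of_nat_diff)
qed

end
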